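(* Let $K(x,y)$ be a real kernel on $\{x\ne y\}\subset\mathbb R^2$ with $|K(x,y)|\le C|x-y|^{-1}$, differentiable in $x$ with $\partial_xK(x,y)\ge c\,(x-y)^{-2}$ for all $x\ne y$, for some $c>0$. Let $J$ be a bounded interval with center $c_J$, $\omega$ a positive Borel measure with $0<\omega(J)<\infty$, and $\mu$ a finite positive Borel measure whose support is disjoint from the closure of $J$; set $T\mu(x)=\int K(x,y)\,d\mu(y)$ for $x\in J$. Then $$\int_J\int_J|T\mu(x)-T\mu(z)|^2\,d\omega(x)\,d\omega(z)\ \ge\ \frac{c^2}{8}\Big(\frac{\mathrm P(J,\mu)}{|J|}\Big)^2\,\omega(J)\int_J\big|x-\mathbb E^\omega_J x\big|^2\,d\omega(x),$$ where $\mathbb E^\omega_Jx=\omega(J)^{-1}\int_Jx\,d\omega(x)$.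
   Context: $\mathrm P(J,\mu)=\int_{\mathbb R}\frac{|J|}{(|J|+\operatorname{dist}(y,J))^2}\,d\mu(y)$. *)

theory Defs
  imports "HOL-Analysis.Analysis"
begin

definition intlen :: "real set \<Rightarrow> real" where
  "intlen J = measure lborel J"

definition msupport :: "real measure \<Rightarrow> real set" where
  "msupport \<mu> = {x. \<forall>e>0. emeasure \<mu> (ball x e) > 0}"

definition poissonP :: "real set \<Rightarrow> real measure \<Rightarrow> real" where
  "poissonP J \<mu> = (\<integral>y. intlen J / (intlen J + infdist y J)\<^sup>2 \<partial>\<mu>)"

end

theory Submission
  imports Defs
begin

text \<open>
  For \<open>z < x\<close> in \<open>J\<close> and \<open>y\<close> off \<open>J\<close>, the mean value theorem and
  \<open>|t - y| \<le> |J| + dist(y, J)\<close> for \<open>t \<in> J\<close> give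
  \<open>K(x,y) - K(z,y) \<ge> c (x - z) / (|J| + dist(y, J))\<^sup>2\<close>; integrating in \<open>\<mu>\<close>,
  \<open>T\<mu>\<close> is increasing on \<open>J\<close> with \<open>|T\<mu>(x) - T\<mu>(z)| \<ge> A |x - z|\<close>, \<open>A = c P(J,\<mu>)/|J|\<close>.
  Hence the double integral is at least \<open>A\<^sup>2 \<integral>\<integral>(x - z)\<^sup>2 d\<omega> d\<omega> = 2 A\<^sup>2 \<omega>(J) Var\<^sub>\<omega>(x)\<close>,
  which is the claim with the constant \<open>2 c\<^sup>2\<close> in place of \<open>c\<^sup>2/8\<close>.
  Only measurability of \<open>K\<close> in \<open>y\<close> is assumed; that of \<open>T\<mu>\<close> on \<open>J\<close> comes from its monotonicity.
\<close>

lemma AE_dist_ge_if_msupport_disjoint: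
  fixes \<mu> :: "real measure" and S :: "real set"
  assumes sets: "sets \<mu> = sets borel" and S: "compact S" and supp: "msupport \<mu> \<inter> S = {}"
  shows "\<exists>\<delta>>0. AE y in \<mu>. \<forall>x\<in>S. \<delta> \<le> dist x y"
proof -
  define \<G> where "\<G> = {ball p e | p e. emeasure \<mu> (ball p e) = 0}"
  have "S \<subseteq> \<Union>\<G>"
  proof
    fix x assume "x \<in> S"
    then have "x \<notin> msupport \<mu>" using supp by blast
    then obtain e where "e > 0" "\<not> emeasure \<mu> (ball x e) > 0" unfolding msupport_def by auto
    then have "ball x e \<in> \<G>" unfolding \<G>_def by (auto simp: zero_less_iff_neq_zero)
    with \<open>e>0\<close> show "x \<in> \<Union>\<G>" by (metis UnionI centre_in_ball)
  qed
  moreover have "\<And>G. G \<in> \<G> \<Longrightarrow> open G" unfolding \<G>_def by auto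
  ultimately obtain \<epsilon> where eps: "0 < \<epsilon>" "\<And>x. x \<in> S \<Longrightarrow> \<exists>G \<in> \<G>. ball x \<epsilon> \<subseteq> G"
    using Heine_Borel_lemma[OF S] by metis
  have "S \<subseteq> (\<Union>q\<in>S. ball q (\<epsilon>/2))" using eps(1) by auto
  then obtain F where F: "F \<subseteq> S" "finite F" "S \<subseteq> (\<Union>q\<in>F. ball q (\<epsilon>/2))"
    using compactE_image[OF S, of S "\<lambda>q. ball q (\<epsilon>/2)"] by auto
  have "AE y in \<mu>. \<forall>q\<in>F. y \<notin> ball q \<epsilon>"
  proof (rule AE_finite_allI[OF F(2)])
    fix q assume "q \<in> F"
    then obtain G where G: "G \<in> \<G>" "ball q \<epsilon> \<subseteq> G" using eps F by blast
    then obtain p e where pe: "G = ball p e" "emeasure \<mu> (ball p e) = 0" unfolding \<G>_def by auto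
    have "ball q \<epsilon> \<in> null_sets \<mu>"
      by (rule null_sets_subset[of G]) (use pe G sets in \<open>auto simp: null_sets_def\<close>)
    then show "AE y in \<mu>. y \<notin> ball q \<epsilon>" by (rule AE_not_in)
  qed
  then have "AE y in \<mu>. \<forall>x\<in>S. \<epsilon>/2 \<le> dist x y"
  proof (rule AE_mp, intro AE_I2 impI ballI)
    fix y x assume H: "\<forall>q\<in>F. y \<notin> ball q \<epsilon>" "x \<in> S"
    then obtain q where q: "q \<in> F" "dist q x < \<epsilon>/2" using F(3) by auto
    have "\<epsilon> \<le> dist q y" using H q by auto
    moreover have "dist q y \<le> dist q x + dist x y" by (rule dist_triangle)
    ultimately show "\<epsilon>/2 \<le> dist x y" using q by linarith
  qed
  then show ?thesis using eps(1) by (intro exI[of _ "\<epsilon>/2"]) auto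
qed

lemma (in finite_measure) integral_sq_diff_const:
  fixes g :: "'a \<Rightarrow> real"
  assumes "integrable M g" "integrable M (\<lambda>x. (g x)\<^sup>2)"
  shows "(\<integral>z. (g z - t)\<^sup>2 \<partial>M)
    = (\<integral>z. (g z)\<^sup>2 \<partial>M) - 2 * t * (\<integral>z. g z \<partial>M) + measure M (space M) * t\<^sup>2"
  using assms by (simp add: power2_diff)

lemma (in finite_measure) double_integral_sq_diff:
  fixes g :: "'a \<Rightarrow> real"
  assumes "integrable M g" "integrable M (\<lambda>x. (g x)\<^sup>2)"
  shows "integrable M (\<lambda>x. \<integral>z. (g x - g z)\<^sup>2 \<partial>M)"
    and "(\<integral>x. \<integral>z. (g x - g z)\<^sup>2 \<partial>M \<partial>M)
      = 2 * (measure M (space M) * (\<integral>x. (g x)\<^sup>2 \<partial>M) - (\<integral>x. g x \<partial>M)\<^sup>2)"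
proof -
  have inner: "(\<integral>z. (g x - g z)\<^sup>2 \<partial>M)
      = (\<integral>z. (g z)\<^sup>2 \<partial>M) - 2 * (\<integral>z. g z \<partial>M) * g x + measure M (space M) * (g x)\<^sup>2" for x
    using integral_sq_diff_const[OF assms, of "g x"] by (simp add: power2_commute ac_simps)
  show "integrable M (\<lambda>x. \<integral>z. (g x - g z)\<^sup>2 \<partial>M)"
    unfolding inner using assms by simp
  show "(\<integral>x. \<integral>z. (g x - g z)\<^sup>2 \<partial>M \<partial>M)
      = 2 * (measure M (space M) * (\<integral>x. (g x)\<^sup>2 \<partial>M) - (\<integral>x. g x \<partial>M)\<^sup>2)"
    unfolding inner using assms by (simp add: algebra_simps power2_eq_square[of "integral\<^sup>L M g"])
qed

lemma (in finite_measure) measure_mul_integral_sq_diff_mean: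
  fixes g :: "'a \<Rightarrow> real"
  assumes "integrable M g" "integrable M (\<lambda>x. (g x)\<^sup>2)" "measure M (space M) > 0"
  shows "measure M (space M) * (\<integral>x. (g x - (\<integral>t. g t \<partial>M) / measure M (space M))\<^sup>2 \<partial>M)
    = measure M (space M) * (\<integral>x. (g x)\<^sup>2 \<partial>M) - (\<integral>x. g x \<partial>M)\<^sup>2"
  using assms
  by (simp add: integral_sq_diff_const field_simps
      power2_eq_square[of "integral\<^sup>L M g"] power2_eq_square[of "measure M (space M)"])

lemma (in finite_measure) double_integral_sq_diff_mono:
  fixes f g :: "'a \<Rightarrow> real"
  assumes f: "integrable M f" "integrable M (\<lambda>x. (f x)\<^sup>2)"
    and g: "integrable M g" "integrable M (\<lambda>x. (g x)\<^sup>2)"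
    and A: "0 \<le> A" "\<And>x z. x \<in> space M \<Longrightarrow> z \<in> space M \<Longrightarrow> A * \<bar>f x - f z\<bar> \<le> \<bar>g x - g z\<bar>"
  shows "A\<^sup>2 * (\<integral>x. \<integral>z. (f x - f z)\<^sup>2 \<partial>M \<partial>M) \<le> (\<integral>x. \<integral>z. (g x - g z)\<^sup>2 \<partial>M \<partial>M)"
proof -
  have sq_integrable: "integrable M (\<lambda>z. (t - h z)\<^sup>2)"
    if "integrable M h" "integrable M (\<lambda>x. (h x)\<^sup>2)" for h :: "'a \<Rightarrow> real" and t
    using that by (simp add: power2_diff)
  have "A\<^sup>2 * (f x - f z)\<^sup>2 \<le> (g x - g z)\<^sup>2" if "x \<in> space M" "z \<in> space M" for x z
    using power_mono[OF A(2)[OF that], of 2] A(1) by (simp add: power_mult_distrib)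
  then have "(\<integral>z. A\<^sup>2 * (f x - f z)\<^sup>2 \<partial>M) \<le> (\<integral>z. (g x - g z)\<^sup>2 \<partial>M)" if "x \<in> space M" for x
    using that by (intro integral_mono integrable_mult_right sq_integrable f g)
  then have "(\<integral>x. A\<^sup>2 * (\<integral>z. (f x - f z)\<^sup>2 \<partial>M) \<partial>M) \<le> (\<integral>x. \<integral>z. (g x - g z)\<^sup>2 \<partial>M \<partial>M)"
    by (intro integral_mono integrable_mult_right double_integral_sq_diff(1) f g) simp_all
  then show ?thesis by simp
qed

lemma set_double_integral_sq_diff_ge:
  fixes \<omega> :: "real measure" and T :: "real \<Rightarrow> real"
  assumes \<omega>: "sets \<omega> = sets borel" "0 < measure \<omega> J" "emeasure \<omega> J < \<infinity>"
    and J: "J \<in> sets borel" "bounded J"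
    and T: "T \<in> borel_measurable (restrict_space borel J)" "bounded (T ` J)"
    and A: "0 \<le> A" "\<And>x z. x \<in> J \<Longrightarrow> z \<in> J \<Longrightarrow> A * \<bar>x - z\<bar> \<le> \<bar>T x - T z\<bar>"
  shows "2 * A\<^sup>2 * measure \<omega> J * (LINT x:J|\<omega>. (x - (LINT t:J|\<omega>. t) / measure \<omega> J)\<^sup>2)
    \<le> (LINT x:J|\<omega>. LINT z:J|\<omega>. (T x - T z)\<^sup>2)"
proof -
  define R where "R = restrict_space \<omega> J"
  have J\<omega>: "J \<in> sets \<omega>" using J \<omega> by simp
  have space_R: "space R = J" unfolding R_def using J\<omega> by simp
  interpret R: finite_measure R
    by (rule finite_measureI) (use \<omega> J\<omega> in \<open>simp add: R_def emeasure_restrict_space\<close>)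
  have integral_R: "(LINT x:J|\<omega>. h x) = (\<integral>x. h x \<partial>R)" for h :: "real \<Rightarrow> real"
    unfolding R_def set_lebesgue_integral_def using J\<omega> by (subst integral_restrict_space) auto
  have measure_R: "measure R (space R) = measure \<omega> J"
    unfolding space_R R_def using J\<omega> by (simp add: measure_restrict_space)
  have square_integrable: "integrable R h \<and> integrable R (\<lambda>x. (h x)\<^sup>2)"
    if "h \<in> borel_measurable R" "bounded (h ` J)" for h :: "real \<Rightarrow> real"
  proof -
    obtain B where B: "\<And>x. x \<in> J \<Longrightarrow> \<bar>h x\<bar> \<le> B" using \<open>bounded (h ` J)\<close> by (auto simp: bounded_iff)
    have "\<bar>(h x)\<^sup>2\<bar> \<le> B\<^sup>2" if "x \<in> J" for x
      using power_mono[OF B[OF that] abs_ge_zero, of 2] by simp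
    with B that(1) show ?thesis
      by (auto intro!: R.integrable_const_bound AE_I2 simp: space_R)
  qed
  have "(\<lambda>x. x) \<in> borel_measurable R"
    unfolding R_def by (rule measurable_restrict_space1[OF measurable_ident_sets[OF \<omega>(1)]])
  then have id_sq_int: "integrable R (\<lambda>x. x)" "integrable R (\<lambda>x. x\<^sup>2)"
    using square_integrable J(2) by auto
  have "T \<in> borel_measurable R"
    unfolding R_def using T(1) by (simp add: measurable_cong_sets[OF sets_restrict_space_cong[OF \<omega>(1)] refl])
  then have T_sq_int: "integrable R T" "integrable R (\<lambda>x. (T x)\<^sup>2)"
    using square_integrable T(2) by auto
  have "2 * A\<^sup>2 * measure \<omega> J * (LINT x:J|\<omega>. (x - (LINT t:J|\<omega>. t) / measure \<omega> J)\<^sup>2)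
      = A\<^sup>2 * (\<integral>x. \<integral>z. (x - z)\<^sup>2 \<partial>R \<partial>R)"
    using R.measure_mul_integral_sq_diff_mean[OF id_sq_int] R.double_integral_sq_diff(2)[OF id_sq_int] \<omega>(2)
    by (simp add: integral_R measure_R)
  also have "\<dots> \<le> (\<integral>x. \<integral>z. (T x - T z)\<^sup>2 \<partial>R \<partial>R)"
    using R.double_integral_sq_diff_mono[OF id_sq_int T_sq_int A(1)] A(2) by (simp add: space_R)
  also have "\<dots> = (LINT x:J|\<omega>. LINT z:J|\<omega>. (T x - T z)\<^sup>2)"
    by (simp add: integral_R)
  finally show ?thesis .
qed

lemma increment_ge_of_deriv_ge:
  fixes f f' :: "real \<Rightarrow> real"
  assumes "\<And>t. t \<in> {z..x} \<Longrightarrow> (f has_real_derivative f' t) (at t)"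
    and "\<And>t. t \<in> {z..x} \<Longrightarrow> b \<le> f' t" and "z \<le> x"
  shows "b * (x - z) \<le> f x - f z"
proof -
  have "f z - b * z \<le> f x - b * x"
    by (rule deriv_nonneg_imp_mono[where g = "\<lambda>t. f t - b * t" and g' = "\<lambda>t. f' t - b"])
      (use assms in \<open>auto intro!: derivative_eq_intros\<close>)
  then show ?thesis by (simp add: algebra_simps)
qed

lemma abs_diff_le_intlen:
  assumes J: "is_interval J" "bounded J" and "x \<in> J" "z \<in> J"
  shows "\<bar>x - z\<bar> \<le> intlen J"
proof -
  have J_fin: "J \<in> fmeasurable lborel"
    using real_interval_borel_measurable[OF J(1)] emeasure_bounded_finite[OF J(2)]
    by (intro fmeasurableI) auto
  have "v - u \<le> intlen J" if "u \<in> J" "v \<in> J" "u \<le> v" for u v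
  proof -
    have "{u..v} \<subseteq> J" using J(1) that by (meson atLeastAtMost_iff is_interval_1 subsetI)
    then have "measure lborel {u..v} \<le> measure lborel J"
      by (intro measure_mono_fmeasurable J_fin) auto
    then show ?thesis using that(3) by (simp add: intlen_def measure_def)
  qed
  then show ?thesis using assms by (cases "z \<le> x") auto
qed

lemma dist_le_add_infdist:
  fixes A :: "'a::metric_space set"
  assumes "A \<noteq> {}" "\<And>w. w \<in> A \<Longrightarrow> dist x w \<le> D"
  shows "dist x y \<le> D + infdist y A"
proof -
  have "dist x y - D \<le> (INF w\<in>A. dist y w)"
  proof (rule cINF_greatest[OF assms(1)])
    fix w assume "w \<in> A"
    then show "dist x y - D \<le> dist y w"
      using dist_triangle[of x y w] assms(2)[of w] dist_commute[of w y] by linarith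
  qed
  then show ?thesis using assms(1) by (simp add: infdist_def)
qed

lemma integrable_kernel_bound:
  fixes K :: "real \<Rightarrow> real \<Rightarrow> real" and \<mu> :: "real measure"
  assumes \<mu>: "finite_measure \<mu>" "sets \<mu> = sets borel"
    and K_bound: "\<And>y. x \<noteq> y \<Longrightarrow> \<bar>K x y\<bar> \<le> C / \<bar>x - y\<bar>"
    and K_meas: "(\<lambda>y. K x y) \<in> borel_measurable borel"
    and sep: "0 < \<delta>" "AE y in \<mu>. \<delta> \<le> \<bar>x - y\<bar>"
  shows "integrable \<mu> (\<lambda>y. K x y)" and "\<bar>\<integral>y. K x y \<partial>\<mu>\<bar> \<le> \<bar>C\<bar> / \<delta> * measure \<mu> (space \<mu>)"
proof -
  interpret finite_measure \<mu> by (rule \<mu>(1))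
  have bound: "AE y in \<mu>. \<bar>K x y\<bar> \<le> \<bar>C\<bar> / \<delta>"
    using sep(2)
  proof eventually_elim
    case (elim y)
    then have "x \<noteq> y" using sep(1) by auto
    then have "\<bar>K x y\<bar> \<le> C / \<bar>x - y\<bar>" by (rule K_bound)
    also have "\<dots> \<le> \<bar>C\<bar> / \<bar>x - y\<bar>" by (intro divide_right_mono) auto
    also have "\<dots> \<le> \<bar>C\<bar> / \<delta>" using elim sep(1) by (intro divide_left_mono) auto
    finally show ?case .
  qed
  show int: "integrable \<mu> (\<lambda>y. K x y)"
    using bound K_meas \<mu>(2) by (intro integrable_const_bound[where B = "\<bar>C\<bar> / \<delta>"]) auto
  have "\<bar>\<integral>y. K x y \<partial>\<mu>\<bar> \<le> (\<integral>y. \<bar>K x y\<bar> \<partial>\<mu>)" by (rule integral_abs_bound)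
  also have "\<dots> \<le> (\<integral>y. \<bar>C\<bar> / \<delta> \<partial>\<mu>)" using int bound by (intro integral_mono_AE) auto
  finally show "\<bar>\<integral>y. K x y \<partial>\<mu>\<bar> \<le> \<bar>C\<bar> / \<delta> * measure \<mu> (space \<mu>)" by (simp add: mult.commute)
qed

lemma integral_kernel_increment_ge:
  fixes K Kx :: "real \<Rightarrow> real \<Rightarrow> real" and \<mu> :: "real measure"
  assumes \<mu>: "finite_measure \<mu>" "sets \<mu> = sets borel"
    and J: "is_interval J" "bounded J" "AE y in \<mu>. y \<notin> J"
    and K_deriv: "\<And>x y. x \<noteq> y \<Longrightarrow> ((\<lambda>t. K t y) has_real_derivative Kx x y) (at x)"
    and Kx_lower: "\<And>x y. x \<noteq> y \<Longrightarrow> c / (x - y)\<^sup>2 \<le> Kx x y" and "0 \<le> c"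
    and K_int: "integrable \<mu> (\<lambda>y. K x y)" "integrable \<mu> (\<lambda>y. K z y)"
    and xz: "z \<in> J" "x \<in> J" "z < x"
  shows "c * (poissonP J \<mu> / intlen J) * (x - z) \<le> (\<integral>y. K x y \<partial>\<mu>) - (\<integral>y. K z y \<partial>\<mu>)"
proof -
  interpret finite_measure \<mu> by (rule \<mu>(1))
  define L where "L = intlen J"
  define d where "d y = 1 / (L + infdist y J)\<^sup>2" for y
  have "x - z \<le> L" using abs_diff_le_intlen[OF J(1,2) xz(2,1)] by (simp add: L_def)
  then have "0 < L" using xz(3) by simp
  have L_infdist_pos: "0 < L + infdist y J" for y using \<open>0 < L\<close> infdist_nonneg[of y J] by linarith
  have "d \<in> borel_measurable borel"
    unfolding d_def using L_infdist_pos
    by (intro borel_measurable_continuous_onI continuous_intros) (auto simp: less_imp_neq[symmetric])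
  moreover have "\<bar>d y\<bar> \<le> 1 / L\<^sup>2" for y
    unfolding d_def using \<open>0 < L\<close> infdist_nonneg[of y J]
    by (auto intro!: divide_left_mono power_mono)
  ultimately have d_int: "integrable \<mu> d"
    using \<mu>(2) by (intro integrable_const_bound[where B = "1 / L\<^sup>2"]) auto
  have "poissonP J \<mu> = L * (\<integral>y. d y \<partial>\<mu>)"
    unfolding poissonP_def d_def L_def by (simp flip: integral_mult_right_zero)
  then have P: "poissonP J \<mu> / intlen J = (\<integral>y. d y \<partial>\<mu>)"
    using \<open>0 < L\<close> by (simp add: L_def)
  have "AE y in \<mu>. c * d y * (x - z) \<le> K x y - K z y"
    using J(3)
  proof eventually_elim
    case (elim y)
    have segment: "t \<in> J" if "t \<in> {z..x}" for t
      using J(1) xz(1,2) that unfolding is_interval_1 by (meson atLeastAtMost_iff)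
    show ?case
    proof (rule increment_ge_of_deriv_ge[where f' = "\<lambda>t. Kx t y"])
      fix t assume t: "t \<in> {z..x}"
      then have "t \<noteq> y" using segment elim by auto
      then show "((\<lambda>t. K t y) has_real_derivative Kx t y) (at t)" by (rule K_deriv)
      have "\<bar>t - y\<bar> \<le> L + infdist y J"
        using dist_le_add_infdist[of J t L y] abs_diff_le_intlen[OF J(1,2) segment[OF t]] xz(1)
        by (auto simp: dist_real_def L_def)
      then have "(t - y)\<^sup>2 \<le> (L + infdist y J)\<^sup>2"
        using L_infdist_pos[of y] by (simp add: abs_le_square_iff[symmetric])
      then have "c * d y \<le> c / (t - y)\<^sup>2"
        unfolding d_def using \<open>0 \<le> c\<close> \<open>t \<noteq> y\<close> L_infdist_pos[of y]
        by (simp add: divide_left_mono)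
      also have "\<dots> \<le> Kx t y" using \<open>t \<noteq> y\<close> by (rule Kx_lower)
      finally show "c * d y \<le> Kx t y" .
    qed (use xz in auto)
  qed
  then have "(\<integral>y. c * d y * (x - z) \<partial>\<mu>) \<le> (\<integral>y. K x y - K z y \<partial>\<mu>)"
    using d_int K_int by (intro integral_mono_AE) auto
  then show ?thesis using K_int by (simp add: P mult.commute mult.left_commute)
qed

lemma poissonP_nonneg: "0 \<le> poissonP J \<mu>"
  unfolding poissonP_def intlen_def by (auto intro!: integral_nonneg_AE)

lemma kernel_transform_mono_expanding:
  fixes K Kx :: "real \<Rightarrow> real \<Rightarrow> real" and \<mu> :: "real measure"
  defines "T \<equiv> \<lambda>x. \<integral>y. K x y \<partial>\<mu>"
  assumes K_bound: "\<And>x y. x \<noteq> y \<Longrightarrow> \<bar>K x y\<bar> \<le> C / \<bar>x - y\<bar>"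
    and K_deriv: "\<And>x y. x \<noteq> y \<Longrightarrow> ((\<lambda>t. K t y) has_real_derivative Kx x y) (at x)"
    and Kx_lower: "\<And>x y. x \<noteq> y \<Longrightarrow> c / (x - y)\<^sup>2 \<le> Kx x y" and "0 \<le> c"
    and K_meas: "\<And>x. (\<lambda>y. K x y) \<in> borel_measurable borel"
    and J: "is_interval J" "bounded J"
    and \<mu>: "finite_measure \<mu>" "sets \<mu> = sets borel"
    and supp: "msupport \<mu> \<inter> closure J = {}"
  shows "mono_on J T" and "bounded (T ` J)"
    and "\<And>x z. x \<in> J \<Longrightarrow> z \<in> J \<Longrightarrow> c * (poissonP J \<mu> / intlen J) * \<bar>x - z\<bar> \<le> \<bar>T x - T z\<bar>"
proof -
  define A where "A = c * (poissonP J \<mu> / intlen J)"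
  have "0 \<le> A"
    unfolding A_def intlen_def using \<open>0 \<le> c\<close> poissonP_nonneg by simp
  obtain \<delta> where "0 < \<delta>" and sep: "AE y in \<mu>. \<forall>x\<in>closure J. \<delta> \<le> dist x y"
    using AE_dist_ge_if_msupport_disjoint[OF \<mu>(2) _ supp] J(2) by auto
  have sep_x: "AE y in \<mu>. \<delta> \<le> \<bar>x - y\<bar>" if "x \<in> J" for x
    using sep by eventually_elim (use that closure_subset in \<open>auto simp: dist_real_def\<close>)
  have T_int: "integrable \<mu> (\<lambda>y. K x y)" and T_bound: "\<bar>T x\<bar> \<le> \<bar>C\<bar> / \<delta> * measure \<mu> (space \<mu>)"
    if "x \<in> J" for x
    using integrable_kernel_bound[where K = K and x = x, OF \<mu> K_bound K_meas \<open>0 < \<delta>\<close> sep_x[OF that]]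
    by (simp_all add: T_def)
  then show "bounded (T ` J)"
    by (auto simp: bounded_iff)
  have "AE y in \<mu>. y \<notin> J"
    using sep by eventually_elim (use \<open>0 < \<delta>\<close> closure_subset in force)
  then have increment: "A * (x - z) \<le> T x - T z" if "z \<in> J" "x \<in> J" "z < x" for x z
    using integral_kernel_increment_ge[OF \<mu> J _ K_deriv Kx_lower \<open>0 \<le> c\<close>
        T_int[OF that(2)] T_int[OF that(1)] that]
    by (simp add: A_def T_def)
  show "A * \<bar>x - z\<bar> \<le> \<bar>T x - T z\<bar>" if "x \<in> J" "z \<in> J" for x z
    using increment[of z x] increment[of x z] that \<open>0 \<le> A\<close>
    by (cases x z rule: linorder_cases) (auto simp: abs_if mult_nonneg_nonneg)
  show "mono_on J T"
  proof (rule mono_onI)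
    fix r s assume "r \<in> J" "s \<in> J" "r \<le> s"
    then show "T r \<le> T s"
      using increment[of r s] mult_nonneg_nonneg[OF \<open>0 \<le> A\<close>, of "s - r"] by (cases "r = s") auto
  qed
qed

theorem mainTheorem11:
  fixes K Kx :: "real \<Rightarrow> real \<Rightarrow> real"
    and C c :: real
    and J :: "real set"
    and \<omega> \<mu> :: "real measure"
  assumes K_bound: "\<And>x y. x \<noteq> y \<Longrightarrow> \<bar>K x y\<bar> \<le> C / \<bar>x - y\<bar>"
    and K_deriv: "\<And>x y. x \<noteq> y \<Longrightarrow> ((\<lambda>t. K t y) has_real_derivative Kx x y) (at x)"
    and Kx_lower: "\<And>x y. x \<noteq> y \<Longrightarrow> Kx x y \<ge> c / (x - y)\<^sup>2"
    and c_pos: "c > 0"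
    and K_meas: "\<And>x. (\<lambda>y. K x y) \<in> borel_measurable borel"
    and J_int: "is_interval J" and J_bdd: "bounded J"
    and \<omega>_sets: "sets \<omega> = sets borel"
    and \<omega>J_pos: "emeasure \<omega> J > 0" and \<omega>J_fin: "emeasure \<omega> J < \<infinity>"
    and \<mu>_sets: "sets \<mu> = sets borel"
    and \<mu>_fin: "finite_measure \<mu>"
    and supp: "msupport \<mu> \<inter> closure J = {}"
  shows "(LINT x:J|\<omega>. (LINT z:J|\<omega>. ((\<integral>y. K x y \<partial>\<mu>) - (\<integral>y. K z y \<partial>\<mu>))\<^sup>2))
      \<ge> c\<^sup>2 / 8 * (poissonP J \<mu> / intlen J)\<^sup>2 * measure \<omega> J *
         (LINT x:J|\<omega>. (x - (LINT t:J|\<omega>. t) / measure \<omega> J)\<^sup>2)"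
proof -
  define A where "A = c * (poissonP J \<mu> / intlen J)"
  note T = kernel_transform_mono_expanding[OF K_bound K_deriv Kx_lower less_imp_le[OF c_pos] K_meas
      J_int J_bdd \<mu>_fin \<mu>_sets supp]
  have "0 \<le> A"
    unfolding A_def intlen_def using c_pos poissonP_nonneg by simp
  have "0 < measure \<omega> J"
    using \<omega>J_pos \<omega>J_fin by (simp add: measure_def enn2real_positive_iff)
  from set_double_integral_sq_diff_ge[OF \<omega>_sets this \<omega>J_fin real_interval_borel_measurable[OF J_int]
      J_bdd borel_measurable_mono_on_fnc[OF T(1)] T(2) \<open>0 \<le> A\<close> T(3)[folded A_def]]
  have main: "2 * A\<^sup>2 * (measure \<omega> J * (LINT x:J|\<omega>. (x - (LINT t:J|\<omega>. t) / measure \<omega> J)\<^sup>2))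
      \<le> (LINT x:J|\<omega>. LINT z:J|\<omega>. ((\<integral>y. K x y \<partial>\<mu>) - (\<integral>y. K z y \<partial>\<mu>))\<^sup>2)"
    by (simp add: mult.assoc)
  have "0 \<le> measure \<omega> J * (LINT x:J|\<omega>. (x - (LINT t:J|\<omega>. t) / measure \<omega> J)\<^sup>2)"
    by (auto simp: set_lebesgue_integral_def intro!: integral_nonneg_AE)
  moreover have "2 * A\<^sup>2 = 16 * (c\<^sup>2 / 8 * (poissonP J \<mu> / intlen J)\<^sup>2)"
    unfolding A_def power_mult_distrib by simp
  then have "c\<^sup>2 / 8 * (poissonP J \<mu> / intlen J)\<^sup>2 \<le> 2 * A\<^sup>2"
    by simp
  ultimately show ?thesis
    using main mult_right_mono by (fastforce simp: mult.assoc)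
qed

end
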